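(* Let $G$ be a (finite, simple) graph with $\operatorname{mad}(G) < 3$ and $\Delta(G) \leq 4$. Then $\chi'_{\mathrm{slist}}(G) \leq 3\Delta(G) + 1$.
   Context: $\Delta(G)$ denotes the maximum degree of $G$. The maximum average degree is $\operatorname{mad}(G) = \max_{H \subseteq G} \frac{2|E(H)|}{|V(H)|}$, the maximum over all (nonempty) subgraphs $H$ of $G$. A strong edge coloring of $G$ is an assignment of colors to the edges such that any two distinct edges $e_1 = uv$ and $e_2$ receive different colors whenever $e_2$ is incident with a vertex of $N_G(u) \cup N_G(v)$ (equivalently, a proper edge coloring in which every color class is an induced matching). A list assignment $L$ assigns to each edge $e$ a set $L(e)$ of colors; a strong edge coloring $c$ is an $L$-coloring if $c(e) \in L(e)$ for every edge $e$. The list strong chromatic index $\chi'_{\mathrm{slist}}(G)$ is the least $k$ such that for every list assignment $L$ with $|L(e)| \geq k$ for all edges $e$, $G$ has a strong edge $L$-coloring. *)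

theory Defs
  imports Main "HOL-Library.Cardinality" Complex_Main
begin

definition simple_graph :: "'a set \<Rightarrow> 'a set set \<Rightarrow> bool" where
  "simple_graph V E \<longleftrightarrow> finite V \<and>
     (\<forall>e\<in>E. \<exists>u v. u \<noteq> v \<and> u \<in> V \<and> v \<in> V \<and> e = {u, v})"

definition neighbors :: "'a set set \<Rightarrow> 'a \<Rightarrow> 'a set" where
  "neighbors E v = {u. {u, v} \<in> E}"

definition degree :: "'a set set \<Rightarrow> 'a \<Rightarrow> nat" where
  "degree E v = card (neighbors E v)"

definition max_degree :: "'a set \<Rightarrow> 'a set set \<Rightarrow> nat" where
  "max_degree V E = Max (insert 0 (degree E ` V))"

definition subgraph :: "'a set \<Rightarrow> 'a set set \<Rightarrow> 'a set \<Rightarrow> 'a set set \<Rightarrow> bool" where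
  "subgraph V' E' V E \<longleftrightarrow> V' \<subseteq> V \<and> E' \<subseteq> E \<and> (\<forall>e\<in>E'. e \<subseteq> V')"

definition mad :: "'a set \<Rightarrow> 'a set set \<Rightarrow> real" where
  "mad V E = Max {2 * real (card E') / real (card V') | V' E'.
                    subgraph V' E' V E \<and> V' \<noteq> {}}"

definition strong_edge_coloring :: "'a set set \<Rightarrow> ('a set \<Rightarrow> 'c) \<Rightarrow> bool" where
  "strong_edge_coloring E c \<longleftrightarrow>
     (\<forall>e1\<in>E. \<forall>e2\<in>E. e1 \<noteq> e2 \<and> (\<exists>x\<in>e1. \<exists>y\<in>e2. y \<in> neighbors E x) \<longrightarrow> c e1 \<noteq> c e2)"

definition L_coloring :: "'a set set \<Rightarrow> ('a set \<Rightarrow> 'c set) \<Rightarrow> ('a set \<Rightarrow> 'c) \<Rightarrow> bool" where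
  "L_coloring E L c \<longleftrightarrow> (\<forall>e\<in>E. c e \<in> L e)"

text \<open>Colours are natural numbers; lists are finite
  (card of an infinite set is 0 in Isabelle, so infinite lists are excluded, which is
  harmless since any infinite list contains a finite sublist of size k).\<close>
definition strong_list_colorable :: "'a set set \<Rightarrow> nat \<Rightarrow> bool" where
  "strong_list_colorable E k \<longleftrightarrow>
     (\<forall>L :: 'a set \<Rightarrow> nat set. (\<forall>e\<in>E. finite (L e) \<and> k \<le> card (L e)) \<longrightarrow>
        (\<exists>c. strong_edge_coloring E c \<and> L_coloring E L c))"

definition list_strong_chromatic_index :: "'a set set \<Rightarrow> nat" where
  "list_strong_chromatic_index E = (LEAST k. strong_list_colorable E k)"

end

theory Submission
  imports Defs
begin

text \<open>
  Colouring greedily along a degeneracy order, it suffices that every nonempty set \<open>S\<close> of edges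
  contains an edge in conflict with at most \<open>3\<Delta>\<close> other edges of \<open>S\<close>. The edges of \<open>S\<close>
  conflicting with \<open>uv \<in> S\<close> all pass through a neighbour of \<open>u\<close> or \<open>v\<close> in the set \<open>W\<close> of
  vertices covered by \<open>S\<close>, so their number is bounded by a sum of \<open>S\<close>-degrees over these
  neighbours. If every edge of \<open>S\<close> had more than \<open>3\<Delta>\<close> conflicts, every vertex of the induced
  subgraph \<open>G[W]\<close> would have degree at least 2, and at least 3 when \<open>\<Delta> \<le> 3\<close>. When
  \<open>\<Delta> = 4\<close>, an \<open>S\<close>-neighbour of a vertex of degree 2 is forced to have degree 4 and at
  most two neighbours of degree 2, so discharging shows that \<open>G[W]\<close> has at least as many
  vertices of degree 4 as of degree 2. Either way \<open>G[W]\<close> has average degree at least 3, contradicting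
  \<open>mad(G) < 3\<close>.
\<close>

section \<open>Greedy list colouring\<close>

lemma greedy_list_coloring:
  fixes R :: "'b \<Rightarrow> 'b \<Rightarrow> bool" and L :: "'b \<Rightarrow> 'c set"
  assumes "finite X"
    and R_sym: "\<And>x y. R x y \<Longrightarrow> R y x"
    and degenerate: "\<And>S. S \<subseteq> X \<Longrightarrow> S \<noteq> {} \<Longrightarrow> \<exists>x\<in>S. card {y\<in>S. y \<noteq> x \<and> R x y} \<le> m"
    and long_lists: "\<And>x. x \<in> X \<Longrightarrow> m < card (L x)"
  shows "\<exists>c. (\<forall>x\<in>X. \<forall>y\<in>X. x \<noteq> y \<and> R x y \<longrightarrow> c x \<noteq> c y) \<and> (\<forall>x\<in>X. c x \<in> L x)"
proof -
  have "\<exists>c. (\<forall>x\<in>S. \<forall>y\<in>S. x \<noteq> y \<and> R x y \<longrightarrow> c x \<noteq> c y) \<and> (\<forall>x\<in>S. c x \<in> L x)"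
    if "S \<subseteq> X" for S
    using finite_subset[OF that \<open>finite X\<close>] that
  proof (induction S rule: finite_psubset_induct)
    case (psubset S)
    show ?case
    proof (cases "S = {}")
      case False
      let ?C = "\<lambda>x. {y\<in>S. y \<noteq> x \<and> R x y}"
      obtain x where x: "x \<in> S" and few: "card (?C x) \<le> m"
        using degenerate psubset.prems False by blast
      obtain c where proper: "\<forall>y\<in>S - {x}. \<forall>z\<in>S - {x}. y \<noteq> z \<and> R y z \<longrightarrow> c y \<noteq> c z"
        and in_lists: "\<forall>y\<in>S - {x}. c y \<in> L y"
        using psubset.IH[of "S - {x}"] psubset.prems x by blast
      have "finite (?C x)" using psubset.hyps by simp
      moreover have "card (c ` ?C x) < card (L x)"
        using card_image_le[OF \<open>finite (?C x)\<close>, of c] few long_lists[of x] x psubset.prems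
        by auto
      ultimately obtain col where col: "col \<in> L x" "col \<notin> c ` ?C x"
        by (meson card_mono finite_imageI not_le subsetI)
      have "\<forall>y\<in>S. \<forall>z\<in>S. y \<noteq> z \<and> R y z \<longrightarrow> (c(x := col)) y \<noteq> (c(x := col)) z"
      proof (intro ballI impI)
        fix y z assume "y \<in> S" "z \<in> S" "y \<noteq> z \<and> R y z"
        then show "(c(x := col)) y \<noteq> (c(x := col)) z"
          using proper col(2) R_sym by (cases "y = x"; cases "z = x") force+
      qed
      moreover have "\<forall>y\<in>S. (c(x := col)) y \<in> L y"
        using in_lists col(1) by simp
      ultimately show ?thesis by blast
    qed simp
  qed
  then show ?thesis by blast
qed

section \<open>Finite simple graphs and conflicts between edges\<close>

lemma neighbors_commute: "y \<in> neighbors F x \<longleftrightarrow> x \<in> neighbors F y"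
  unfolding neighbors_def by (metis insert_commute mem_Collect_eq)

definition edges_conflict :: "'a set set \<Rightarrow> 'a set \<Rightarrow> 'a set \<Rightarrow> bool" where
  "edges_conflict E e f \<longleftrightarrow> (\<exists>x\<in>e. \<exists>y\<in>f. y \<in> neighbors E x)"

definition conflicts :: "'a set set \<Rightarrow> 'a set set \<Rightarrow> 'a set \<Rightarrow> 'a set set" where
  "conflicts E S e = {f\<in>S. f \<noteq> e \<and> edges_conflict E e f}"

lemma edges_conflict_commute: "edges_conflict E e f \<longleftrightarrow> edges_conflict E f e"
  unfolding edges_conflict_def by (meson neighbors_commute)

locale finite_simple_graph =
  fixes V :: "'a set" and E :: "'a set set"
  assumes simple_graph: "simple_graph V E"
begin

lemma finite_vertices: "finite V"
  using simple_graph unfolding simple_graph_def by blast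

lemma edgeE:
  assumes "e \<in> E"
  obtains u v where "u \<noteq> v" "u \<in> V" "v \<in> V" "e = {u, v}"
  using simple_graph assms unfolding simple_graph_def by blast

lemma finite_edges: "finite E"
proof (rule finite_subset)
  show "E \<subseteq> Pow V" by (auto elim: edgeE)
qed (simp add: finite_vertices)

lemma subgraph_finite_simple_graph: "F \<subseteq> E \<Longrightarrow> finite_simple_graph V F"
  using simple_graph unfolding simple_graph_def finite_simple_graph_def by blast

lemma neighbors_subset_vertices: "neighbors E x \<subseteq> V"
  unfolding neighbors_def by (auto elim!: edgeE simp: doubleton_eq_iff)

lemma finite_neighbors: "finite (neighbors E x)"
  using finite_subset[OF neighbors_subset_vertices finite_vertices] .

lemma card_neighbors_le_max_degree: "card (neighbors E x) \<le> max_degree V E"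
proof (cases "x \<in> V")
  case True
  then have "degree E x \<in> insert 0 (degree E ` V)" by blast
  then show ?thesis
    unfolding max_degree_def degree_def[symmetric]
    by (rule Max_ge[rotated]) (simp add: finite_vertices)
next
  case False
  then have "neighbors E x = {}"
    by (metis equals0I neighbors_commute neighbors_subset_vertices subsetD)
  then show ?thesis by simp
qed

lemma Union_edges_subset: "\<Union>E \<subseteq> V"
  by (auto elim!: edgeE)

lemma in_Union_edges: "x \<in> \<Union>E \<longleftrightarrow> (\<exists>z. {x, z} \<in> E)"
proof
  assume "x \<in> \<Union>E"
  then obtain e where "e \<in> E" "x \<in> e" by blast
  moreover from \<open>e \<in> E\<close> obtain u v where "e = {u, v}" by (rule edgeE)
  ultimately show "\<exists>z. {x, z} \<in> E" by (auto simp: insert_commute)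
qed blast

lemma edges_at_eq_image: "{e\<in>E. x \<in> e} = (\<lambda>z. {z, x}) ` neighbors E x"
proof (intro equalityI subsetI)
  fix e assume e: "e \<in> {e\<in>E. x \<in> e}"
  then obtain u v where "e = {u, v}" by (auto elim: edgeE)
  with e have "\<exists>z. {z, x} \<in> E \<and> e = {z, x}"
    by (auto simp: insert_commute)
  then show "e \<in> (\<lambda>z. {z, x}) ` neighbors E x"
    unfolding neighbors_def by (auto simp: insert_commute)
qed (auto simp: neighbors_def)

lemma card_edges_at: "card {e\<in>E. x \<in> e} = degree E x"
  unfolding edges_at_eq_image degree_def
  by (rule card_image) (auto simp: inj_on_def doubleton_eq_iff)

lemma sum_degree: "(\<Sum>x\<in>V. degree E x) = 2 * card E"
proof -
  have "(\<Sum>x\<in>V. degree E x) = (\<Sum>x\<in>V. \<Sum>e\<in>E. if x \<in> e then 1 else 0)"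
    by (simp add: sum.inter_filter[symmetric] finite_edges card_edges_at)
  also have "\<dots> = (\<Sum>e\<in>E. \<Sum>x\<in>V. if x \<in> e then 1 else 0)"
    by (rule sum.swap)
  also have "\<dots> = (\<Sum>e\<in>E. 2)"
  proof (rule sum.cong)
    fix e assume "e \<in> E"
    then obtain u v where "u \<noteq> v" "u \<in> V" "v \<in> V" "e = {u, v}" by (rule edgeE)
    then have "{x\<in>V. x \<in> e} = {u, v}" by auto
    then show "(\<Sum>x\<in>V. if x \<in> e then 1 else 0) = (2::nat)"
      using \<open>u \<noteq> v\<close> by (simp add: sum.inter_filter[symmetric] finite_vertices)
  qed simp
  finally show ?thesis by simp
qed

lemma induced_subgraph_finite_simple_graph:
  assumes "W \<subseteq> V"
  shows "finite_simple_graph W {e\<in>E. e \<subseteq> W}"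
  unfolding finite_simple_graph_def simple_graph_def
proof
  show "finite W" using finite_subset[OF assms finite_vertices] .
  show "\<forall>e\<in>{e\<in>E. e \<subseteq> W}. \<exists>u v. u \<noteq> v \<and> u \<in> W \<and> v \<in> W \<and> e = {u, v}"
    by (auto elim!: edgeE)
qed

lemma sum_card_neighbors_Int:
  assumes "W \<subseteq> V"
  shows "(\<Sum>x\<in>W. card (neighbors E x \<inter> W)) = 2 * card {e\<in>E. e \<subseteq> W}"
proof -
  interpret G_W: finite_simple_graph W "{e\<in>E. e \<subseteq> W}"
    using assms by (rule induced_subgraph_finite_simple_graph)
  have "neighbors E x \<inter> W = neighbors {e\<in>E. e \<subseteq> W} x" if "x \<in> W" for x
    using that unfolding neighbors_def by auto
  then have "(\<Sum>x\<in>W. card (neighbors E x \<inter> W)) = (\<Sum>x\<in>W. degree {e\<in>E. e \<subseteq> W} x)"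
    unfolding degree_def by simp
  then show ?thesis using G_W.sum_degree by simp
qed

lemma edge_density_le_mad:
  assumes "W \<subseteq> V" and "W \<noteq> {}"
  shows "2 * real (card {e\<in>E. e \<subseteq> W}) / real (card W) \<le> mad V E"
proof -
  let ?ratios = "{2 * real (card E') / real (card V') | V' E'. subgraph V' E' V E \<and> V' \<noteq> {}}"
  have "?ratios \<subseteq> (\<lambda>(V', E'). 2 * real (card E') / real (card V')) ` (Pow V \<times> Pow E)"
    unfolding subgraph_def by auto
  then have "finite ?ratios"
    by (rule finite_subset) (simp add: finite_vertices finite_edges)
  moreover have "subgraph W {e\<in>E. e \<subseteq> W} V E"
    using assms(1) unfolding subgraph_def by auto
  ultimately show ?thesis
    unfolding mad_def using assms(2) by (intro Max_ge) blast+
qed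

lemma sum_card_neighbors_Int_lt:
  assumes "mad V E < 3" and "W \<subseteq> V" and "W \<noteq> {}"
  shows "(\<Sum>x\<in>W. card (neighbors E x \<inter> W)) < 3 * card W"
proof -
  have "card W > 0"
    using assms(2,3) finite_subset[OF assms(2) finite_vertices] by (simp add: card_gt_0_iff)
  moreover have "2 * real (card {e\<in>E. e \<subseteq> W}) / real (card W) < 3"
    using edge_density_le_mad[OF assms(2,3)] assms(1) by linarith
  ultimately have "2 * card {e\<in>E. e \<subseteq> W} < 3 * card W"
    by (simp add: divide_less_eq flip: of_nat_less_iff)
  then show ?thesis using sum_card_neighbors_Int[OF assms(2)] by simp
qed

lemma conflict_meets_neighbourhood:
  assumes "S \<subseteq> E" and "f \<in> S" and "f \<noteq> {u, v}" and "b \<in> f" and "b \<in> neighbors E u"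
  shows "\<exists>y\<in>f. y \<in> neighbors E v \<inter> \<Union>S - {u} \<or> y \<in> neighbors E u \<inter> \<Union>S - {v}"
proof -
  obtain c where f: "f = {b, c}" "b \<noteq> c"
    using assms(1,2,4) by (auto elim!: edgeE)
  show ?thesis
  proof (cases "b = v")
    case True
    then have "c \<noteq> u" using f assms(3) by (auto simp: insert_commute)
    moreover have "c \<in> neighbors E v"
      using f True assms(1,2) unfolding neighbors_def by (auto simp: insert_commute)
    ultimately show ?thesis using f assms(2) by auto
  next
    case False
    then show ?thesis using assms(2,4,5) by auto
  qed
qed

lemma card_conflicts_le:
  assumes "S \<subseteq> E" and "{u, v} \<in> S"
  shows "card (conflicts E S {u, v})
    \<le> (\<Sum>y\<in>neighbors E v \<inter> \<Union>S - {u}. degree S y) + (\<Sum>y\<in>neighbors E u \<inter> \<Union>S - {v}. degree S y)"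
proof -
  interpret S: finite_simple_graph V S
    using assms(1) by (rule subgraph_finite_simple_graph)
  define A where "A = neighbors E v \<inter> \<Union>S - {u}"
  define B where "B = neighbors E u \<inter> \<Union>S - {v}"
  have fin: "finite A" "finite B"
    unfolding A_def B_def using finite_neighbors by auto
  have "conflicts E S {u, v} \<subseteq> (\<Union>y\<in>A. {f\<in>S. y \<in> f}) \<union> (\<Union>y\<in>B. {f\<in>S. y \<in> f})"
  proof
    fix f assume "f \<in> conflicts E S {u, v}"
    then have f: "f \<in> S" "f \<noteq> {u, v}" "f \<noteq> {v, u}"
      and "\<exists>a\<in>{u, v}. \<exists>b\<in>f. b \<in> neighbors E a"
      unfolding conflicts_def edges_conflict_def by (auto simp: insert_commute)
    then have "\<exists>y\<in>f. y \<in> A \<or> y \<in> B"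
      unfolding A_def B_def using conflict_meets_neighbourhood[OF assms(1)] by blast
    then show "f \<in> (\<Union>y\<in>A. {f\<in>S. y \<in> f}) \<union> (\<Union>y\<in>B. {f\<in>S. y \<in> f})"
      using f(1) by blast
  qed
  moreover have "finite ((\<Union>y\<in>A. {f\<in>S. y \<in> f}) \<union> (\<Union>y\<in>B. {f\<in>S. y \<in> f}))"
    using S.finite_edges by (simp add: fin)
  ultimately have "card (conflicts E S {u, v})
      \<le> card ((\<Union>y\<in>A. {f\<in>S. y \<in> f}) \<union> (\<Union>y\<in>B. {f\<in>S. y \<in> f}))"
    by (rule card_mono[rotated])
  also have "\<dots> \<le> card (\<Union>y\<in>A. {f\<in>S. y \<in> f}) + card (\<Union>y\<in>B. {f\<in>S. y \<in> f})"
    by (rule card_Un_le)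
  also have "\<dots> \<le> (\<Sum>y\<in>A. card {f\<in>S. y \<in> f}) + (\<Sum>y\<in>B. card {f\<in>S. y \<in> f})"
    by (intro add_mono card_UN_le fin)
  finally show ?thesis
    unfolding A_def B_def S.card_edges_at .
qed

end

section \<open>Edge sets in which every edge has many conflicts\<close>

text \<open>Degrees are taken in the subgraph of \<open>G\<close> induced by the vertex set \<open>W\<close> covered by \<open>S\<close>:
  \<open>NW x\<close> is the neighbourhood of \<open>x\<close> there.\<close>

locale dense_conflicts = finite_simple_graph +
  fixes S :: "'a set set"
  assumes edges_subset: "S \<subseteq> E"
    and max_degree_le_4: "max_degree V E \<le> 4"
    and many_conflicts: "\<And>e. e \<in> S \<Longrightarrow> 3 * max_degree V E < card (conflicts E S e)"
begin

sublocale S: finite_simple_graph V S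
  using edges_subset by (rule subgraph_finite_simple_graph)

abbreviation \<Delta> :: nat where "\<Delta> \<equiv> max_degree V E"

abbreviation W :: "'a set" where "W \<equiv> \<Union>S"

abbreviation NW :: "'a \<Rightarrow> 'a set" where "NW x \<equiv> neighbors E x \<inter> W"

lemma degree_sum_around_edge_gt:
  assumes "{u, v} \<in> S"
  shows "3 * \<Delta> < (\<Sum>y\<in>NW v - {u}. degree S y) + (\<Sum>y\<in>NW u - {v}. degree S y)"
  using many_conflicts[OF assms] card_conflicts_le[OF edges_subset assms] by linarith

lemma finite_W: "finite W"
  using finite_subset[OF S.Union_edges_subset finite_vertices] .

lemma finite_NW: "finite (NW x)"
  using finite_neighbors by simp

lemma card_NW_le: "card (NW x) \<le> \<Delta>"
  using card_mono[OF finite_neighbors, of "NW x" x] card_neighbors_le_max_degree[of x] by simp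

lemma NW_sym: "x \<in> W \<Longrightarrow> y \<in> NW x \<Longrightarrow> x \<in> NW y"
  by (metis IntD1 IntD2 IntI neighbors_commute)

lemma edge_in_NW: "{x, z} \<in> S \<Longrightarrow> z \<in> NW x"
  using edges_subset unfolding neighbors_def by (auto simp: insert_commute)

lemma neighbors_S_subset_NW: "neighbors S x \<subseteq> NW x"
  using edges_subset unfolding neighbors_def by auto

lemma in_W_if_degree_S_pos: "0 < degree S x \<Longrightarrow> x \<in> W"
  unfolding degree_def neighbors_def by (auto simp: card_gt_0_iff)

lemma degree_S_le_card_NW: "degree S x \<le> card (NW x)"
  unfolding degree_def by (rule card_mono[OF finite_NW neighbors_S_subset_NW])

lemma degree_S_le_max_degree: "degree S x \<le> \<Delta>"
  using degree_S_le_card_NW card_NW_le le_trans by blast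

lemma sum_degree_S_NW_le:
  assumes "x \<in> NW v"
  shows "(\<Sum>y\<in>NW v - {x}. degree S y) \<le> (\<Delta> - 1) * \<Delta>"
proof -
  have "(\<Sum>y\<in>NW v - {x}. degree S y) \<le> card (NW v - {x}) * \<Delta>"
    using sum_bounded_above[of _ "degree S" \<Delta>] degree_S_le_max_degree by simp
  also have "card (NW v - {x}) \<le> \<Delta> - 1"
    using assms card_NW_le[of v] finite_NW[of v] by simp
  finally show ?thesis by (simp add: mult_right_mono)
qed

lemma card_NW_eq_2E:
  assumes "card (NW x) = 2" and "v \<in> NW x"
  obtains w where "NW x = {v, w}" and "v \<noteq> w"
proof -
  obtain a b where "NW x = {a, b}" "a \<noteq> b"
    using assms(1) by (meson card_2_iff)
  with assms(2) have "NW x = {v, if v = a then b else a}" "v \<noteq> (if v = a then b else a)"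
    by auto
  then show thesis by (rule that)
qed

lemma two_le_card_NW:
  assumes "x \<in> W"
  shows "2 \<le> card (NW x)"
proof (rule ccontr)
  assume small: "\<not> 2 \<le> card (NW x)"
  obtain z where xz: "{x, z} \<in> S"
    using assms S.in_Union_edges by blast
  have "z \<in> NW x" "x \<in> NW z"
    using edge_in_NW xz by (auto simp: insert_commute)
  moreover have "card (NW x) \<le> Suc 0"
    using small by simp
  ultimately have "NW x - {z} = {}"
    using card_le_Suc0_iff_eq[OF finite_NW] by blast
  then have "3 * \<Delta> < (\<Delta> - 1) * \<Delta>"
    using degree_sum_around_edge_gt[OF xz] sum_degree_S_NW_le[OF \<open>x \<in> NW z\<close>]
    by (simp only: sum.empty)
  moreover have "\<Delta> \<in> {0, 1, 2, 3, 4}"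
    using max_degree_le_4 by auto
  ultimately show False by auto
qed

lemma three_le_card_NW:
  assumes "\<Delta> \<le> 3" and "x \<in> W"
  shows "3 \<le> card (NW x)"
proof (rule ccontr)
  assume "\<not> 3 \<le> card (NW x)"
  then have "card (NW x) = 2"
    using two_le_card_NW[OF assms(2)] by simp
  obtain z where xz: "{x, z} \<in> S"
    using assms(2) S.in_Union_edges by blast
  then obtain w where "NW x = {z, w}" "z \<noteq> w"
    using card_NW_eq_2E[OF \<open>card (NW x) = 2\<close> edge_in_NW] by blast
  then have "NW x - {z} = {w}" by auto
  then have "(\<Sum>y\<in>NW x - {z}. degree S y) = degree S w" by simp
  moreover have "x \<in> NW z"
    using edge_in_NW[of z x] xz by (simp add: insert_commute)
  ultimately have "3 * \<Delta> < (\<Delta> - 1) * \<Delta> + \<Delta>"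
    using degree_sum_around_edge_gt[OF xz] sum_degree_S_NW_le[of x z] degree_S_le_max_degree[of w]
    by linarith
  moreover have "\<Delta> \<in> {0, 1, 2, 3}"
    using assms(1) by auto
  ultimately show False by auto
qed

end

locale dense_conflicts_4 = dense_conflicts +
  assumes max_degree_eq_4: "max_degree V E = 4"
begin

abbreviation W2 :: "'a set" where "W2 \<equiv> {x\<in>W. card (NW x) = 2}"

abbreviation W4 :: "'a set" where "W4 \<equiv> {x\<in>W. card (NW x) = 4}"

abbreviation deg2 :: "'a \<Rightarrow> nat" where "deg2 v \<equiv> card (NW v \<inter> W2)"

lemma sum_degree_S_W2_le:
  assumes "A \<subseteq> W"
  shows "(\<Sum>y\<in>A. degree S y) + 2 * card (A \<inter> W2) \<le> 4 * card A"
proof -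
  have fin: "finite A"
    using finite_subset[OF assms finite_W] .
  have "(\<Sum>y\<in>A. degree S y) + 2 * card (A \<inter> W2)
      = (\<Sum>y\<in>A. degree S y + (if y \<in> W2 then 2 else 0))"
    using fin by (simp add: sum.distrib sum.If_cases Int_def)
  also have "\<dots> \<le> (\<Sum>y\<in>A. 4)"
  proof (rule sum_mono)
    fix y
    show "degree S y + (if y \<in> W2 then 2 else 0) \<le> 4"
      using degree_S_le_card_NW[of y] card_NW_le[of y] max_degree_eq_4 by auto
  qed
  finally show ?thesis by simp
qed

lemma W2_edge_inequality:
  assumes "x \<in> W2" and xv: "{x, v} \<in> S" and "NW x = {v, w}" and "v \<noteq> w"
  shows "14 + 2 * deg2 v < 4 * card (NW v) + degree S w"
proof -
  define A where "A = NW v - {x}"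
  have "x \<in> NW v"
    using edge_in_NW[of v x] xv by (simp add: insert_commute)
  then have "card (NW v) = Suc (card A)"
    unfolding A_def using card_Suc_Diff1[OF finite_NW] by simp
  moreover have "A \<inter> W2 = NW v \<inter> W2 - {x}"
    unfolding A_def by blast
  then have "deg2 v = Suc (card (A \<inter> W2))"
    using card_Suc_Diff1[of "NW v \<inter> W2" x] finite_NW \<open>x \<in> NW v\<close> assms(1) by simp
  moreover have "NW x - {v} = {w}"
    using assms(3,4) by auto
  then have "(\<Sum>y\<in>NW x - {v}. degree S y) = degree S w" by simp
  then have "12 < (\<Sum>y\<in>A. degree S y) + degree S w"
    using degree_sum_around_edge_gt[OF xv] max_degree_eq_4 unfolding A_def by linarith
  moreover have "(\<Sum>y\<in>A. degree S y) + 2 * card (A \<inter> W2) \<le> 4 * card A"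
    by (rule sum_degree_S_W2_le) (auto simp: A_def)
  ultimately show ?thesis by linarith
qed

lemma deg2_pos: "x \<in> W2 \<Longrightarrow> x \<in> NW v \<Longrightarrow> 1 \<le> deg2 v"
  using finite_NW[of v] by (simp add: Suc_le_eq card_gt_0_iff) blast

lemma W2_edge_partner:
  assumes "x \<in> W2" and xv: "{x, v} \<in> S"
  shows "v \<in> W4" and "deg2 v \<le> 2"
proof -
  have "card (NW x) = 2" "v \<in> NW x"
    using assms edge_in_NW by auto
  then obtain w where "NW x = {v, w}" "v \<noteq> w"
    by (rule card_NW_eq_2E)
  then have "14 + 2 * deg2 v < 4 * card (NW v) + degree S w"
    by (rule W2_edge_inequality[OF assms])
  moreover have "card (NW v) \<le> 4" "degree S w \<le> 4"
    using card_NW_le degree_S_le_max_degree max_degree_eq_4 by auto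
  moreover have "1 \<le> deg2 v"
    using deg2_pos[OF assms(1)] edge_in_NW[of v x] xv by (simp add: insert_commute)
  ultimately have "card (NW v) = 4" "deg2 v \<le> 2" by linarith+
  moreover have "v \<in> W"
    using xv by blast
  ultimately show "v \<in> W4" "deg2 v \<le> 2" by auto
qed

lemma S_neighbors_of_high_degree:
  assumes "x \<in> NW w" and "{x, w} \<notin> S" and "3 \<le> degree S w"
  shows "card (NW w) = 4" and "neighbors S w = NW w - {x}"
proof -
  have S_nbrs: "neighbors S w \<subseteq> NW w - {x}"
    using neighbors_S_subset_NW[of w] assms(2) unfolding neighbors_def by blast
  have "card (NW w - {x}) = card (NW w) - 1"
    using assms(1) finite_NW by simp
  moreover have "card (neighbors S w) \<le> card (NW w - {x})"
    using S_nbrs finite_NW by (intro card_mono) auto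
  moreover have "card (NW w) \<le> 4"
    using card_NW_le max_degree_eq_4 by simp
  ultimately have "card (NW w) = 4" and card_eq: "card (neighbors S w) = card (NW w - {x})"
    using assms(3) unfolding degree_def by linarith+
  then show "card (NW w) = 4" by simp
  show "neighbors S w = NW w - {x}"
    using card_subset_eq[OF _ S_nbrs card_eq] finite_NW by simp
qed

lemma W2_neighbour_of_high_degree:
  assumes "x \<in> W2" and "x \<in> NW w" and "3 \<le> degree S w"
  shows "w \<in> W4 \<and> deg2 w \<le> 2"
proof (cases "{x, w} \<in> S")
  case True
  then show ?thesis using W2_edge_partner[OF assms(1) True] by simp
next
  case False
  note S_nbrs = S_neighbors_of_high_degree[OF assms(2) False assms(3)]
  have "w \<in> W"
    using assms(3) by (intro in_W_if_degree_S_pos) simp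
  moreover have "deg2 w \<le> 2"
  proof (cases "NW w \<inter> W2 \<subseteq> {x}")
    case True
    then have "deg2 w \<le> card {x}"
      by (intro card_mono) simp_all
    then show ?thesis by simp
  next
    case False
    then obtain a where "a \<in> W2" "a \<in> neighbors S w"
      using S_nbrs(2) by blast
    then show ?thesis
      using W2_edge_partner(2)[of a w] unfolding neighbors_def by blast
  qed
  ultimately show ?thesis using S_nbrs(1) by blast
qed

text \<open>Discharging: a vertex \<open>v \<in> W4\<close> sends \<open>2 div deg2 v\<close> to each of its \<open>deg2 v\<close>
  neighbours in \<open>W2\<close>, hence at most 2 in total.\<close>

lemma W2_receives_charge:
  assumes "x \<in> W2"
  shows "2 \<le> (\<Sum>v\<in>NW x \<inter> W4. 2 div deg2 v)"
proof -
  obtain v where xv: "{x, v} \<in> S"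
    using assms S.in_Union_edges by blast
  then have "card (NW x) = 2" "v \<in> NW x"
    using assms edge_in_NW by auto
  then obtain w where NWx: "NW x = {v, w}" "v \<noteq> w"
    by (rule card_NW_eq_2E)
  have v: "v \<in> W4" "deg2 v \<le> 2"
    using W2_edge_partner[OF assms xv] by auto
  have "1 \<le> deg2 v"
    using deg2_pos[OF assms] edge_in_NW[of v x] xv by (simp add: insert_commute)
  show ?thesis
  proof (cases "deg2 v = 1")
    case True
    have "2 div deg2 v \<le> (\<Sum>u\<in>NW x \<inter> W4. 2 div deg2 u)"
      using v NWx finite_NW[of x] by (intro member_le_sum) auto
    with True show ?thesis by simp
  next
    case False
    then have "deg2 v = 2"
      using v \<open>1 \<le> deg2 v\<close> by linarith
    then have "3 \<le> degree S w"
      using W2_edge_inequality[OF assms xv NWx] card_NW_le[of v] max_degree_eq_4 by linarith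
    moreover have "x \<in> NW w"
      using NW_sym[of x w] assms NWx by auto
    ultimately have w: "w \<in> W4" "1 \<le> deg2 w" "deg2 w \<le> 2"
      using W2_neighbour_of_high_degree[OF assms] deg2_pos[OF assms] by auto
    then have "NW x \<inter> W4 = {v, w}"
      using NWx v by auto
    moreover have "deg2 w \<in> {1, 2}"
      using w(2,3) by auto
    then have "1 \<le> 2 div deg2 w" by auto
    ultimately show ?thesis
      using NWx \<open>deg2 v = 2\<close> by simp
  qed
qed

lemma card_W2_le_card_W4: "card W2 \<le> card W4"
proof -
  have fin: "finite W2" "finite W4"
    using finite_subset[OF _ finite_W] by (metis (no_types, lifting) mem_Collect_eq subsetI)+
  have "2 * card W2 = (\<Sum>x\<in>W2. 2)" by simp
  also have "\<dots> \<le> (\<Sum>x\<in>W2. \<Sum>v\<in>NW x \<inter> W4. 2 div deg2 v)"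
    by (intro sum_mono W2_receives_charge)
  also have "\<dots> = (\<Sum>x\<in>W2. \<Sum>v\<in>{v\<in>W4. v \<in> NW x}. 2 div deg2 v)"
    by (intro sum.cong) auto
  also have "\<dots> = (\<Sum>v\<in>W4. \<Sum>x\<in>{x\<in>W2. v \<in> NW x}. 2 div deg2 v)"
    by (rule sum.swap_restrict) (use fin in auto)
  also have "\<dots> = (\<Sum>v\<in>W4. deg2 v * (2 div deg2 v))"
  proof (rule sum.cong)
    fix v assume "v \<in> W4"
    then have "{x\<in>W2. v \<in> NW x} = NW v \<inter> W2"
      using NW_sym[of _ v] NW_sym[of v] by blast
    then show "(\<Sum>x\<in>{x\<in>W2. v \<in> NW x}. 2 div deg2 v) = deg2 v * (2 div deg2 v)"
      by simp
  qed simp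
  also have "\<dots> \<le> (\<Sum>v\<in>W4. 2)"
    by (intro sum_mono) simp
  finally show ?thesis by simp
qed

end

lemma (in dense_conflicts) three_card_W_le_sum_card_NW: "3 * card W \<le> (\<Sum>x\<in>W. card (NW x))"
proof (cases "\<Delta> \<le> 3")
  case True
  then show ?thesis
    using three_le_card_NW sum_mono[of W "\<lambda>_. 3" "\<lambda>x. card (NW x)"] by simp
next
  case False
  then interpret dense_conflicts_4 V E S
    using max_degree_le_4 by unfold_locales simp
  let ?W2 = "{x\<in>W. card (NW x) = 2}" and ?W4 = "{x\<in>W. card (NW x) = 4}"
  have "(\<Sum>x\<in>W. 3 + (if x \<in> ?W4 then 1 else 0))
      \<le> (\<Sum>x\<in>W. card (NW x) + (if x \<in> ?W2 then 1 else 0))"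
  proof (rule sum_mono)
    fix x assume "x \<in> W"
    then show "3 + (if x \<in> ?W4 then 1 else 0) \<le> card (NW x) + (if x \<in> ?W2 then 1 else 0)"
      using two_le_card_NW[of x] card_NW_le[of x] max_degree_le_4 by auto
  qed
  then have "3 * card W + card ?W4 \<le> (\<Sum>x\<in>W. card (NW x)) + card ?W2"
    using finite_W by (simp add: sum.distrib sum.If_cases Int_def)
  then show ?thesis
    using card_W2_le_card_W4 by linarith
qed

lemma (in finite_simple_graph) exists_edge_with_few_conflicts:
  assumes "mad V E < 3" and "max_degree V E \<le> 4" and "S \<subseteq> E" and "S \<noteq> {}"
  shows "\<exists>e\<in>S. card (conflicts E S e) \<le> 3 * max_degree V E"
proof (rule ccontr)
  assume "\<not> ?thesis"
  then interpret dense_conflicts V E S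
    using assms(2,3) by unfold_locales auto
  obtain e where "e \<in> S" using assms(4) by blast
  moreover from \<open>e \<in> S\<close> obtain u v where "e = {u, v}" by (rule S.edgeE)
  ultimately have "\<Union>S \<noteq> {}" by blast
  moreover have "\<Union>S \<subseteq> V" by (rule S.Union_edges_subset)
  ultimately show False
    using sum_card_neighbors_Int_lt[OF assms(1)] three_card_W_le_sum_card_NW by (meson not_le)
qed

lemma (in finite_simple_graph) strong_list_colorable_if_few_conflicts:
  assumes "\<And>S. S \<subseteq> E \<Longrightarrow> S \<noteq> {} \<Longrightarrow> \<exists>e\<in>S. card (conflicts E S e) \<le> m"
  shows "strong_list_colorable E (Suc m)"
  unfolding strong_list_colorable_def
proof (intro allI impI)
  fix L :: "'a set \<Rightarrow> nat set"
  assume "\<forall>e\<in>E. finite (L e) \<and> Suc m \<le> card (L e)"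
  then have long_lists: "m < card (L e)" if "e \<in> E" for e
    using that by auto
  have few: "\<exists>e\<in>S. card {f\<in>S. f \<noteq> e \<and> edges_conflict E e f} \<le> m"
    if "S \<subseteq> E" "S \<noteq> {}" for S
    using assms[OF that] unfolding conflicts_def .
  obtain c where "\<forall>e\<in>E. \<forall>f\<in>E. e \<noteq> f \<and> edges_conflict E e f \<longrightarrow> c e \<noteq> c f"
    and "\<forall>e\<in>E. c e \<in> L e"
    using greedy_list_coloring[of E "edges_conflict E" m L, OF finite_edges
        edges_conflict_commute[of E, THEN iffD1] few long_lists]
    by blast
  then show "\<exists>c. strong_edge_coloring E c \<and> L_coloring E L c"
    unfolding strong_edge_coloring_def L_coloring_def edges_conflict_def by blast
qed

theorem theorem2p1:
  fixes V :: "'a set" and E :: "'a set set"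
  assumes "simple_graph V E"
    and "mad V E < 3"
    and "max_degree V E \<le> 4"
  shows "list_strong_chromatic_index E \<le> 3 * max_degree V E + 1"
proof -
  interpret finite_simple_graph V E
    using assms(1) by unfold_locales
  have "strong_list_colorable E (Suc (3 * max_degree V E))"
    using exists_edge_with_few_conflicts[OF assms(2,3)]
    by (rule strong_list_colorable_if_few_conflicts)
  then show ?thesis
    unfolding list_strong_chromatic_index_def by (simp add: Least_le)
qed

end
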